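(* Suppose that $\mathcal{R}_{k} = \{\rho_{k}(x)x;~x\in \bar{\Omega}\}$, $k \geq 1$, is a sequence of near field refractors (for the case $\kappa < -1$ or for the case $-1<\kappa<0$) such that there exists a constant $C > 0$ with $C \leq \rho_{k}(x) \leq r_{0}$ for all $x\in\bar{\Omega}$ and all $k$, and that $\rho_{k} \rightarrow \rho$ uniformly on $\bar{\Omega}$. Then (a) $\mathcal{R} := \{\rho(x)x; ~x\in \bar{\Omega}\}$ is also a near field refractor; (b) For any compact set $K\subset \bar{D}$, $$\varlimsup_{k\rightarrow \infty} \mathcal{T}_{\mathcal{R}_{k}}(K) \subset \mathcal{T}_{\mathcal{R}}(K).$$ (c) For any open set $G \subset \bar{D}$, $$\mathcal{T}_{\mathcal{R}}(G) \subset \varliminf_{k\rightarrow \infty}\mathcal{T}_{\mathcal{R}_{k}}(G) \cup E,$$ where $E$ is the singular set of $\mathcal{R}$.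
   Context: Setting: $n\geq 2$; $\Omega\subset S^{n-1}$ is a domain with $|\partial\Omega|=0$; $D\subset\mathbb{R}^n$ is contained in an $(n-1)$-dimensional hypersurface, $\bar D$ compact, $0\notin\bar D$. Medium I has refractive index $n_1>0$, medium II has $n_2<0$, and $\kappa=n_2/n_1<0$, $\kappa\neq -1$. For $r_0>0$ let $\mathcal{C}_{r_0}=\{tx;\ x\in\bar\Omega,\ 0<t\le r_0\}$. Case $\kappa<-1$: assume (i) there is $\tau\in(0,1-\frac1\kappa)$ with $\inf_{x\in\bar\Omega,P\in\bar D} x\cdot\frac{P}{|P|}\ge \tau+\frac1\kappa$; (ii) for every $m\in S^{n-1}$ and $x\in\mathcal{C}_{r_0}$, $\bar D\cap\{x+tm;\ t\ge0\}$ contains at most one point, where $r_0\in\big(0,\frac{\tau^2\kappa^2}{(1+\sqrt2)^2(1-\kappa)^2}\inf_{P\in\bar D}|P|\big)$. For $P\in\bar D$ and $\kappa|P|<b<|P|$ the refracting oval is $\Gamma(P,b)=\{h(x,P,b)x;\ x\in S^{n-1},\ x\cdot P\ge I(P,b)|P|\}$ with $h(x,P,b)=\frac{(\kappa^2x\cdot P-b)-\sqrt{(\kappa^2x\cdot P-b)^2-(\kappa^2-1)(\kappa^2|P|^2-b^2)}}{\kappa^2-1}$ and $I(P,b)=\frac{b+\sqrt{(\kappa^2-1)(\kappa^2|P|^2-b^2)}}{\kappa^2|P|}$. A surface $\mathcal{R}=\{\rho(x)x;\ x\in\bar\Omega\}\subset\mathcal{C}_{r_0}$ is a near field refractor if for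 every $x_0\in\bar\Omega$ there exist $P\in\bar D$ and $b$ with $\kappa|P|<b<|P|$ such that $\Gamma(P,b)$ supports $\mathcal{R}$ at $\rho(x_0)x_0$, i.e. $\rho(x)\ge h(x,P,b)$ for all $x\in\bar\Omega$, $\rho(x_0)=h(x_0,P,b)$, and $\bar\Omega\subset\{x\in S^{n-1};\ x\cdot\frac{P}{|P|}\ge I(P,b)\}$. Case $-1<\kappa<0$: assume (i) there is $\tau\in(0,1+\kappa)$ with $x\cdot P\ge(\tau-\kappa)|P|$ for all $x\in\bar\Omega$, $P\in\bar D$; (ii) for every $m\in S^{n-1}$ and $x\in\mathcal{C}_{r_0}$, $\bar D\cap\{x+tm;\ t\ge0\}$ contains at most one point, where $r_0\in\big(0,\frac{\tau}{1-\kappa}\mathrm{dist}(0,\bar D)\big)$. The refracting oval is $\mathcal{O}(P,b)=\{h(x,P,b)x;\ x\in S^{n-1},\ x\cdot P\ge b\}$ with $h(x,P,b)=\frac{(b-\kappa^2x\cdot P)+\sqrt{(b-\kappa^2x\cdot P)^2-(1-\kappa^2)(b^2-\kappa^2|P|^2)}}{1-\kappa^2}$. A surface $\mathcal{R}=\{\rho(x)x;\ x\in\bar\Omega\}\subset\mathcal{C}_{r_0}$ is a near field refractor if for every $x_0\in\bar\Omega$ there exist $P\in\bar D$ and $b$ with $\kappa|P|<b<|P|$ such that $\mathcal{O}(P,b)$ supports $\mathcal{R}$ at $\rho(x_0)x_0$, i.e. $\rho(x)\le h(x,P,b)$ for all $x\in\bar\Omega$ and $\rho(x_0)=h(x_0,P,b)$.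 In either case, the refractor mapping is $\mathcal{N}_{\mathcal{R}}(x)=\{P\in\bar D;$ some oval with focus $P$ ($\Gamma(P,b)$ resp. $\mathcal{O}(P,b)$) supports $\mathcal{R}$ at $\rho(x)x\}$, and the trace mapping is $\mathcal{T}_{\mathcal{R}}(P)=\{x\in\bar\Omega;\ P\in\mathcal{N}_{\mathcal{R}}(x)\}$, $\mathcal{T}_{\mathcal{R}}(F)=\bigcup_{P\in F}\mathcal{T}_{\mathcal{R}}(P)$ for $F\subset\bar D$. The singular set $E$ of $\mathcal{R}$ is the set of points $x\in\bar\Omega$ at which $\mathcal{R}$ does not have a unique normal (points of non-differentiability of $\rho$), which in particular contains $\mathcal{T}_{\mathcal{R}}(G)\cap\mathcal{T}_{\mathcal{R}}(G^c)$. *)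

theory Defs
  imports "HOL-Analysis.Analysis" "HOL-Library.Liminf_Limsup"
begin

definition C1_hypersurface :: "'a::euclidean_space set \<Rightarrow> bool" where
  "C1_hypersurface S \<longleftrightarrow>
     (\<forall>p\<in>S. \<exists>U g grad. open U \<and> p \<in> U \<and>
        (\<forall>y\<in>U. (g has_derivative (\<lambda>v. grad y \<bullet> v)) (at y)) \<and>
        continuous_on U grad \<and> (\<forall>y\<in>U. grad y \<noteq> 0) \<and>
        S \<inter> U = {y\<in>U. g y = (0::real)})"

text \<open>Zero surface measure of the (relative) boundary of \<Omega> in the sphere,
  expressed as: the cone over it (truncated at radius 1) is Lebesgue-negligible.\<close>
definition boundary_null :: "'a::euclidean_space set \<Rightarrow> bool" where
  "boundary_null \<Omega> \<longleftrightarrow>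
     negligible {t *\<^sub>R x | t x. x \<in> closure \<Omega> - \<Omega> \<and> 0 \<le> t \<and> t \<le> 1}"

definition standing :: "'a::euclidean_space set \<Rightarrow> 'a set \<Rightarrow> bool" where
  "standing \<Omega> D \<longleftrightarrow>
     DIM('a) \<ge> 2 \<and>
     \<Omega> \<subseteq> sphere 0 1 \<and> \<Omega> \<noteq> {} \<and> openin (top_of_set (sphere 0 1)) \<Omega> \<and> connected \<Omega> \<and>
     boundary_null \<Omega> \<and>
     (\<exists>S. C1_hypersurface S \<and> D \<subseteq> S) \<and>
     compact (closure D) \<and> 0 \<notin> closure D"

definition cone_r :: "'a::euclidean_space set \<Rightarrow> real \<Rightarrow> 'a set" where
  "cone_r \<Omega> r0 = {t *\<^sub>R x | t x. x \<in> closure \<Omega> \<and> 0 < t \<and> t \<le> r0}"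

definition ray_condition :: "'a::euclidean_space set \<Rightarrow> 'a set \<Rightarrow> real \<Rightarrow> bool" where
  "ray_condition \<Omega> D r0 \<longleftrightarrow>
     (\<forall>m\<in>sphere 0 1. \<forall>x\<in>cone_r \<Omega> r0.
        card (closure D \<inter> {x + t *\<^sub>R m | t. t \<ge> 0}) \<le> 1 \<and>
        finite (closure D \<inter> {x + t *\<^sub>R m | t. t \<ge> 0}))"

definition setting1 :: "real \<Rightarrow> 'a::euclidean_space set \<Rightarrow> 'a set \<Rightarrow> real \<Rightarrow> bool" where
  "setting1 \<kappa> \<Omega> D r0 \<longleftrightarrow> \<kappa> < -1 \<and>
     (\<exists>\<tau>. 0 < \<tau> \<and> \<tau> < 1 - 1/\<kappa> \<and>
        (\<forall>x\<in>closure \<Omega>. \<forall>P\<in>closure D. x \<bullet> (P /\<^sub>R norm P) \<ge> \<tau> + 1/\<kappa>) \<and>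
        0 < r0 \<and>
        r0 < \<tau>^2 * \<kappa>^2 / ((1 + sqrt 2)^2 * (1 - \<kappa>)^2) * (INF P\<in>closure D. norm P) \<and>
        ray_condition \<Omega> D r0)"

definition setting2 :: "real \<Rightarrow> 'a::euclidean_space set \<Rightarrow> 'a set \<Rightarrow> real \<Rightarrow> bool" where
  "setting2 \<kappa> \<Omega> D r0 \<longleftrightarrow> -1 < \<kappa> \<and> \<kappa> < 0 \<and>
     (\<exists>\<tau>. 0 < \<tau> \<and> \<tau> < 1 + \<kappa> \<and>
        (\<forall>x\<in>closure \<Omega>. \<forall>P\<in>closure D. x \<bullet> P \<ge> (\<tau> - \<kappa>) * norm P) \<and>
        0 < r0 \<and> r0 < \<tau> / (1 - \<kappa>) * infdist 0 (closure D) \<and>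
        ray_condition \<Omega> D r0)"

definition h1 :: "real \<Rightarrow> 'a::euclidean_space \<Rightarrow> 'a \<Rightarrow> real \<Rightarrow> real" where
  "h1 \<kappa> x P b =
     ((\<kappa>^2 * (x \<bullet> P) - b) - sqrt ((\<kappa>^2 * (x \<bullet> P) - b)^2 - (\<kappa>^2 - 1) * (\<kappa>^2 * (norm P)^2 - b^2)))
     / (\<kappa>^2 - 1)"

definition I1 :: "real \<Rightarrow> 'a::euclidean_space \<Rightarrow> real \<Rightarrow> real" where
  "I1 \<kappa> P b = (b + sqrt ((\<kappa>^2 - 1) * (\<kappa>^2 * (norm P)^2 - b^2))) / (\<kappa>^2 * norm P)"

definition h2 :: "real \<Rightarrow> 'a::euclidean_space \<Rightarrow> 'a \<Rightarrow> real \<Rightarrow> real" where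
  "h2 \<kappa> x P b =
     ((b - \<kappa>^2 * (x \<bullet> P)) + sqrt ((b - \<kappa>^2 * (x \<bullet> P))^2 - (1 - \<kappa>^2) * (b^2 - \<kappa>^2 * (norm P)^2)))
     / (1 - \<kappa>^2)"

text \<open>The oval with focus P and parameter b supports the surface {\<rho>(x)x} at \<rho>(x0)x0
  (\<Gamma>(P,b) if \<kappa> < -1, \<O>(P,b) if -1 < \<kappa> < 0).\<close>
definition supports :: "real \<Rightarrow> 'a::euclidean_space set \<Rightarrow> ('a \<Rightarrow> real) \<Rightarrow> 'a \<Rightarrow> real \<Rightarrow> 'a \<Rightarrow> bool" where
  "supports \<kappa> \<Omega> \<rho> P b x0 \<longleftrightarrow>
     (if \<kappa> < -1 then
        (\<forall>x\<in>closure \<Omega>. \<rho> x \<ge> h1 \<kappa> x P b) \<and> \<rho> x0 = h1 \<kappa> x0 P b \<and>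
        closure \<Omega> \<subseteq> {x \<in> sphere 0 1. x \<bullet> (P /\<^sub>R norm P) \<ge> I1 \<kappa> P b}
      else
        (\<forall>x\<in>closure \<Omega>. \<rho> x \<le> h2 \<kappa> x P b) \<and> \<rho> x0 = h2 \<kappa> x0 P b)"

definition near_field_refractor ::
  "real \<Rightarrow> 'a::euclidean_space set \<Rightarrow> 'a set \<Rightarrow> real \<Rightarrow> ('a \<Rightarrow> real) \<Rightarrow> bool" where
  "near_field_refractor \<kappa> \<Omega> D r0 \<rho> \<longleftrightarrow>
     {\<rho> x *\<^sub>R x | x. x \<in> closure \<Omega>} \<subseteq> cone_r \<Omega> r0 \<and>
     (\<forall>x0\<in>closure \<Omega>. \<exists>P\<in>closure D. \<exists>b. \<kappa> * norm P < b \<and> b < norm P \<and>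
        supports \<kappa> \<Omega> \<rho> P b x0)"

definition refractor_map ::
  "real \<Rightarrow> 'a::euclidean_space set \<Rightarrow> 'a set \<Rightarrow> ('a \<Rightarrow> real) \<Rightarrow> 'a \<Rightarrow> 'a set" where
  "refractor_map \<kappa> \<Omega> D \<rho> x =
     {P \<in> closure D. \<exists>b. \<kappa> * norm P < b \<and> b < norm P \<and> supports \<kappa> \<Omega> \<rho> P b x}"

definition trace_map ::
  "real \<Rightarrow> 'a::euclidean_space set \<Rightarrow> 'a set \<Rightarrow> ('a \<Rightarrow> real) \<Rightarrow> 'a set \<Rightarrow> 'a set" where
  "trace_map \<kappa> \<Omega> D \<rho> F = (\<Union>P\<in>F. {x \<in> closure \<Omega>. P \<in> refractor_map \<kappa> \<Omega> D \<rho> x})"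

text \<open>Singular set: points of closure \<Omega> at which \<rho> (viewed on the sphere, i.e. via
  its 0-homogeneous extension) is not differentiable; boundary points of \<Omega> count as singular.\<close>
definition singular_set :: "'a::euclidean_space set \<Rightarrow> ('a \<Rightarrow> real) \<Rightarrow> 'a set" where
  "singular_set \<Omega> \<rho> =
     {x \<in> closure \<Omega>. x \<notin> \<Omega> \<or> \<not> ((\<lambda>y. \<rho> (y /\<^sub>R norm y)) differentiable (at x))}"

end

theory Submission
  imports Defs
begin

(* Both ovals Gamma(P,b) and O(P,b) are the level set oval_level kappa P X = b, that is
   |X| + kappa |X - P| = b, and h1 = h2 is its radius in direction x.

   (a), (b): along a subsequence the foci P_k (in the compact set closure D) and the parameters
   b_k (in a bounded interval) of supporting ovals converge, and the support inequalities pass to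
   the pointwise limit.  The limit parameter cannot be an endpoint: for b = kappa |P| the oval
   collapses to the origin, contradicting rho >= C > 0, and for b = |P| it reaches P, which lies
   outside the cone C_r0.

   (c): if the oval with focus P supports R at rho(x) x, then X |-> |X| + kappa |X - P| restricted
   to R is extremal at rho(x) x, so where rho is differentiable its gradient
   x + kappa sgn (rho(x) x - P) is normal to R.  Two foci would give positively parallel normals
   of this form, hence equal directions sgn (rho(x) x - P): both foci lie on one ray from rho(x) x,
   contradicting the ray condition.  So the focus at a smooth point is unique, and the argument of
   (b) applied to the compact set closure D - G shows that the foci of R_k eventually lie in G. *)

section \<open>Refracting ovals as level sets\<close>

(* Suffix _small refers to the case -1 < kappa < 0, suffix _large to kappa < -1. *)
definition oval_level :: "real \<Rightarrow> 'a::real_normed_vector \<Rightarrow> 'a \<Rightarrow> real" where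
  "oval_level \<kappa> P X = norm X + \<kappa> * norm (X - P)"

definition oval_normal :: "real \<Rightarrow> 'a::real_normed_vector \<Rightarrow> 'a \<Rightarrow> 'a" where
  "oval_normal \<kappa> P X = sgn X + \<kappa> *\<^sub>R sgn (X - P)"

lemma h1_eq_h2: "h1 \<kappa> x P b = h2 \<kappa> x P b"
proof -
  have "(\<kappa>^2 * (x \<bullet> P) - b)
        - sqrt ((\<kappa>^2 * (x \<bullet> P) - b)^2 - (\<kappa>^2 - 1) * (\<kappa>^2 * (norm P)^2 - b^2))
      = - ((b - \<kappa>^2 * (x \<bullet> P))
        + sqrt ((b - \<kappa>^2 * (x \<bullet> P))^2 - (1 - \<kappa>^2) * (b^2 - \<kappa>^2 * (norm P)^2)))"
    by (simp add: power2_eq_square algebra_simps)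
  moreover have "\<kappa>^2 - 1 = - (1 - \<kappa>^2)" by simp
  ultimately show ?thesis
    unfolding h1_def h2_def by (simp only: minus_divide_divide)
qed

lemma norm_scaleR_diff_sq:
  fixes y P :: "'a::real_inner"
  assumes "norm y = 1"
  shows "(norm (t *\<^sub>R y - P))^2 = t^2 - 2 * t * (y \<bullet> P) + (norm P)^2"
proof -
  have "(norm (t *\<^sub>R y - P))^2 = (t *\<^sub>R y - P) \<bullet> (t *\<^sub>R y - P)"
    by (simp add: power2_norm_eq_inner)
  also have "\<dots> = t^2 * (y \<bullet> y) - 2 * t * (y \<bullet> P) + P \<bullet> P"
    by (simp add: inner_diff_left inner_diff_right inner_commute power2_eq_square algebra_simps)
  finally show ?thesis
    using assms by (simp add: power2_norm_eq_inner[symmetric])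
qed

lemma h2_tendsto:
  assumes "Pn \<longlonglongrightarrow> P" "bn \<longlonglongrightarrow> b"
  shows "(\<lambda>n. h2 \<kappa> y (Pn n) (bn n)) \<longlonglongrightarrow> h2 \<kappa> y P b"
proof (cases "\<kappa>^2 = 1")
  case False
  then show ?thesis unfolding h2_def using assms by (intro tendsto_intros) auto
qed (simp add: h2_def)

lemma I1_tendsto:
  assumes "Pn \<longlonglongrightarrow> P" "bn \<longlonglongrightarrow> b" "P \<noteq> 0" "\<kappa> \<noteq> 0"
  shows "(\<lambda>n. I1 \<kappa> (Pn n) (bn n)) \<longlonglongrightarrow> I1 \<kappa> P b"
  unfolding I1_def using assms by (intro tendsto_intros) auto

lemma h2_sq_eq:
  fixes y P :: "'a::euclidean_space"
  assumes y: "norm y = 1" and \<kappa>: "\<kappa>^2 \<noteq> 1"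
    and disc: "0 \<le> (b - \<kappa>^2 * (y \<bullet> P))^2 - (1 - \<kappa>^2) * (b^2 - \<kappa>^2 * (norm P)^2)"
  shows "(h2 \<kappa> y P b - b)^2 = \<kappa>^2 * (norm (h2 \<kappa> y P b *\<^sub>R y - P))^2"
proof -
  define A where "A = 1 - \<kappa>^2"
  define B where "B = b - \<kappa>^2 * (y \<bullet> P)"
  define D where "D = B^2 - A * (b^2 - \<kappa>^2 * (norm P)^2)"
  define h where "h = h2 \<kappa> y P b"
  have "A \<noteq> 0" using \<kappa> by (simp add: A_def)
  then have "A * h - B = sqrt D"
    by (simp add: h_def h2_def A_def B_def D_def)
  then have "(A * h - B)^2 = D"
    using disc by (simp add: D_def A_def B_def)
  moreover have "A * ((h - b)^2 - \<kappa>^2 * (norm (h *\<^sub>R y - P))^2) = (A * h - B)^2 - D"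
    unfolding norm_scaleR_diff_sq[OF y]
    by (simp add: A_def B_def D_def power2_eq_square algebra_simps)
  ultimately show ?thesis
    using \<open>A \<noteq> 0\<close> by (simp add: h_def)
qed

lemma oval_level_eq_of_sq_eq:
  assumes sq: "(t - b)^2 = \<kappa>^2 * (norm (t *\<^sub>R y - P))^2" and "0 \<le> t"
    and other_root: "t - b = \<kappa> * norm (t *\<^sub>R y - P) \<Longrightarrow> t - b = - \<kappa> * norm (t *\<^sub>R y - P)"
    and y: "norm y = 1"
  shows "oval_level \<kappa> P (t *\<^sub>R y) = b"
proof -
  have "t - b = \<kappa> * norm (t *\<^sub>R y - P) \<or> t - b = - (\<kappa> * norm (t *\<^sub>R y - P))"
    using sq by (simp add: power_mult_distrib[symmetric] power2_eq_iff)
  then have "t - b = - \<kappa> * norm (t *\<^sub>R y - P)"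
    using other_root by auto
  then show ?thesis
    using \<open>0 \<le> t\<close> y by (simp add: oval_level_def)
qed

lemma oval_level_h2_small:
  fixes y P :: "'a::euclidean_space"
  assumes \<kappa>: "-1 < \<kappa>" "\<kappa> < 0" and y: "norm y = 1" and h0: "0 \<le> h2 \<kappa> y P b"
  shows "oval_level \<kappa> P (h2 \<kappa> y P b *\<^sub>R y) = b"
proof -
  define A where "A = 1 - \<kappa>^2"
  define B where "B = b - \<kappa>^2 * (y \<bullet> P)"
  define D where "D = B^2 - A * (b^2 - \<kappa>^2 * (norm P)^2)"
  have A0: "0 < A"
    using \<kappa> abs_square_less_1[of \<kappa>] by (simp add: A_def)
  \<comment> \<open>the discriminant is a sum of squares, which also shows that h2 is the root above b\<close>
  have D_eq: "D = (A * b - B)^2 + A * \<kappa>^2 * (norm (b *\<^sub>R y - P))^2"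
    unfolding norm_scaleR_diff_sq[OF y]
    by (simp add: A_def B_def D_def power2_eq_square algebra_simps)
  then have D0: "0 \<le> D" and "(A * b - B)^2 \<le> D"
    using A0 by simp_all
  then have "A * b - B \<le> sqrt D"
    using real_le_rsqrt by blast
  then have hb: "b \<le> h2 \<kappa> y P b"
    using A0 by (simp add: h2_def A_def B_def D_def le_divide_eq mult.commute)
  have sq: "(h2 \<kappa> y P b - b)^2 = \<kappa>^2 * (norm (h2 \<kappa> y P b *\<^sub>R y - P))^2"
    using D0 A0 by (intro h2_sq_eq[OF y]) (auto simp: A_def B_def D_def)
  show ?thesis
  proof (rule oval_level_eq_of_sq_eq[OF sq h0 _ y])
    assume "h2 \<kappa> y P b - b = \<kappa> * norm (h2 \<kappa> y P b *\<^sub>R y - P)"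
    moreover have "\<kappa> * norm (h2 \<kappa> y P b *\<^sub>R y - P) \<le> 0"
      using \<kappa> by (simp add: mult_nonpos_nonneg)
    ultimately show "h2 \<kappa> y P b - b = - \<kappa> * norm (h2 \<kappa> y P b *\<^sub>R y - P)"
      using hb by linarith
  qed
qed

lemma I1_le_iff:
  fixes y P :: "'a::euclidean_space"
  assumes "P \<noteq> 0" "\<kappa> \<noteq> 0"
  shows "I1 \<kappa> P b \<le> y \<bullet> (P /\<^sub>R norm P)
    \<longleftrightarrow> b + sqrt ((\<kappa>^2 - 1) * (\<kappa>^2 * (norm P)^2 - b^2)) \<le> \<kappa>^2 * (y \<bullet> P)"
proof -
  have pos: "0 < \<kappa>^2 * norm P"
    using assms by simp
  have eq: "y \<bullet> (P /\<^sub>R norm P) = (\<kappa>^2 * (y \<bullet> P)) / (\<kappa>^2 * norm P)"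
    using assms by (simp add: divide_inverse mult.commute)
  have "I1 \<kappa> P b \<le> y \<bullet> (P /\<^sub>R norm P) \<longleftrightarrow>
      (b + sqrt ((\<kappa>^2 - 1) * (\<kappa>^2 * (norm P)^2 - b^2))) / (\<kappa>^2 * norm P)
        \<le> (\<kappa>^2 * (y \<bullet> P)) / (\<kappa>^2 * norm P)"
    unfolding I1_def eq ..
  also have "\<dots> \<longleftrightarrow> b + sqrt ((\<kappa>^2 - 1) * (\<kappa>^2 * (norm P)^2 - b^2)) \<le> \<kappa>^2 * (y \<bullet> P)"
    using pos by (simp only: divide_le_cancel) simp
  finally show ?thesis .
qed

lemma h2_nonneg_large:
  fixes y P :: "'a::euclidean_space"
  assumes \<kappa>: "\<kappa> < -1" and p: "0 < norm P" and b: "\<kappa> * norm P < b" "b < norm P"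
    and I: "I1 \<kappa> P b \<le> y \<bullet> (P /\<^sub>R norm P)"
  shows "0 \<le> (b - \<kappa>^2 * (y \<bullet> P))^2 - (1 - \<kappa>^2) * (b^2 - \<kappa>^2 * (norm P)^2)"
    and "0 \<le> h2 \<kappa> y P b"
proof -
  define A where "A = 1 - \<kappa>^2"
  define B where "B = b - \<kappa>^2 * (y \<bullet> P)"
  define C where "C = b^2 - \<kappa>^2 * (norm P)^2"
  have A0: "A < 0"
    using \<kappa> less_1_mult[of "-\<kappa>" "-\<kappa>"] by (simp add: A_def power2_eq_square)
  have "norm P < - \<kappa> * norm P"
    using mult_strict_right_mono[of 1 "- \<kappa>" "norm P"] \<kappa> p by simp
  then have "\<bar>b\<bar> < - \<kappa> * norm P"
    using b by linarith
  then have "\<bar>b\<bar>^2 < (- \<kappa> * norm P)^2"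
    by (intro power_strict_mono) auto
  then have C0: "C < 0"
    by (simp add: C_def power_mult_distrib)
  have "b + sqrt (A * C) \<le> \<kappa>^2 * (y \<bullet> P)"
    using I I1_le_iff[of P \<kappa>] \<kappa> p by (simp add: A_def C_def algebra_simps)
  then have sB: "sqrt (A * C) \<le> - B"
    by (simp add: B_def)
  have AC: "0 \<le> A * C"
    using A0 C0 by (simp add: mult_nonpos_nonpos)
  then have "(sqrt (A * C))^2 \<le> (- B)^2"
    using sB by (intro power_mono) auto
  then have "A * C \<le> B^2"
    using AC by simp
  then show D0: "0 \<le> (b - \<kappa>^2 * (y \<bullet> P))^2 - (1 - \<kappa>^2) * (b^2 - \<kappa>^2 * (norm P)^2)"
    by (simp add: A_def B_def C_def)
  have B0: "B \<le> 0"
    using sB real_sqrt_ge_zero[OF AC] by linarith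
  have "sqrt (B^2 - A * C) \<le> sqrt (B^2)"
    using AC by (intro real_sqrt_le_mono) simp
  also have "\<dots> = - B"
    using B0 by simp
  finally have "B + sqrt (B^2 - A * C) \<le> 0"
    by simp
  then show "0 \<le> h2 \<kappa> y P b"
    using A0 by (simp add: h2_def A_def B_def C_def divide_nonpos_neg)
qed

lemma oval_level_h2_large:
  fixes y P :: "'a::euclidean_space"
  assumes \<kappa>: "\<kappa> < -1" and y: "norm y = 1" and p: "0 < norm P"
    and b: "\<kappa> * norm P < b" "b < norm P"
    and I: "I1 \<kappa> P b \<le> y \<bullet> (P /\<^sub>R norm P)" and hP: "h2 \<kappa> y P b \<le> norm P"
  shows "oval_level \<kappa> P (h2 \<kappa> y P b *\<^sub>R y) = b"
proof -
  define h where "h = h2 \<kappa> y P b"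
  note nonneg = h2_nonneg_large[OF \<kappa> p b I]
  have "\<kappa>^2 \<noteq> 1"
    using \<kappa> less_1_mult[of "-\<kappa>" "-\<kappa>"] by (simp add: power2_eq_square)
  then have sq: "(h - b)^2 = \<kappa>^2 * (norm (h *\<^sub>R y - P))^2"
    unfolding h_def using nonneg(1) by (rule h2_sq_eq[OF y])
  show ?thesis
    unfolding h_def[symmetric]
  proof (rule oval_level_eq_of_sq_eq[OF sq _ _ y])
    show h0: "0 \<le> h"
      using nonneg(2) by (simp add: h_def)
    assume "h - b = \<kappa> * norm (h *\<^sub>R y - P)"
    moreover have "norm P - h \<le> norm (h *\<^sub>R y - P)"
      using norm_triangle_ineq2[of P "h *\<^sub>R y"] h0 y by (simp add: norm_minus_commute)
    moreover have "\<kappa> * norm (h *\<^sub>R y - P) \<le> - norm (h *\<^sub>R y - P)"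
      using \<kappa> by (intro mult_right_mono[of \<kappa> "-1", simplified]) auto
    ultimately show "h - b = - \<kappa> * norm (h *\<^sub>R y - P)"
      using b by linarith
  qed
qed

lemma h2_left_end:
  assumes "\<kappa> \<le> 0" "\<kappa> * (x \<bullet> P) \<le> norm P"
  shows "h2 \<kappa> x P (\<kappa> * norm P) = 0"
proof -
  have "\<kappa> * norm P - \<kappa>^2 * (x \<bullet> P) = \<kappa> * (norm P - \<kappa> * (x \<bullet> P))"
    by (simp add: power2_eq_square algebra_simps)
  also have "\<dots> \<le> 0"
    using assms by (intro mult_nonpos_nonneg) auto
  finally show ?thesis
    by (simp add: h2_def power_mult_distrib)
qed

lemma h2_right_end_large:
  assumes "\<kappa>^2 \<noteq> 1" "x \<bullet> P = norm P"
  shows "h2 \<kappa> x P (norm P) = norm P"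
proof -
  have "(norm P - \<kappa>^2 * (x \<bullet> P))^2 - (1 - \<kappa>^2) * ((norm P)^2 - \<kappa>^2 * (norm P)^2) = 0"
    using assms(2) by (simp add: power2_eq_square algebra_simps)
  then show ?thesis
    using assms by (simp add: h2_def field_simps)
qed

lemma h2_right_end_small:
  assumes "\<kappa>^2 < 1" "x \<bullet> P \<le> norm P"
  shows "norm P \<le> h2 \<kappa> x P (norm P)"
proof -
  define a where "a = norm P - \<kappa>^2 * (x \<bullet> P)"
  have "\<kappa>^2 * (x \<bullet> P) \<le> \<kappa>^2 * norm P"
    using assms by (intro mult_left_mono) auto
  then have a1: "(1 - \<kappa>^2) * norm P \<le> a"
    by (simp add: a_def algebra_simps)
  moreover have "0 \<le> (1 - \<kappa>^2) * norm P"
    using assms by simp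
  ultimately have "((1 - \<kappa>^2) * norm P)^2 \<le> a^2"
    by (intro power_mono) auto
  then have "0 \<le> a^2 - (1 - \<kappa>^2) * ((norm P)^2 - \<kappa>^2 * (norm P)^2)"
    by (simp add: power2_eq_square algebra_simps)
  then have "a / (1 - \<kappa>^2) \<le> h2 \<kappa> x P (norm P)"
    unfolding h2_def a_def[symmetric] using assms by (intro divide_right_mono) auto
  moreover have "norm P \<le> a / (1 - \<kappa>^2)"
    using a1 assms by (simp add: le_divide_eq mult.commute)
  ultimately show ?thesis
    by linarith
qed

lemma I1_right_end:
  assumes "1 < \<kappa>^2" "P \<noteq> 0"
  shows "I1 \<kappa> P (norm P) = 1"
proof -
  have "(\<kappa>^2 - 1) * (\<kappa>^2 * (norm P)^2 - (norm P)^2) = ((\<kappa>^2 - 1) * norm P)^2"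
    by (simp add: power2_eq_square algebra_simps)
  moreover have "0 \<le> (\<kappa>^2 - 1) * norm P"
    using assms by simp
  ultimately have "sqrt ((\<kappa>^2 - 1) * (\<kappa>^2 * (norm P)^2 - (norm P)^2)) = (\<kappa>^2 - 1) * norm P"
    by simp
  moreover have "\<kappa> \<noteq> 0"
    using assms(1) by auto
  ultimately show ?thesis
    using assms(2) by (simp add: I1_def field_simps)
qed

lemma oval_level_ray_mono_small:
  fixes y P :: "'a::real_normed_vector"
  assumes \<kappa>: "-1 \<le> \<kappa>" "\<kappa> \<le> 0" and y: "norm y = 1" and st: "0 \<le> s" "s \<le> t"
  shows "oval_level \<kappa> P (s *\<^sub>R y) \<le> oval_level \<kappa> P (t *\<^sub>R y)"
proof -
  have "norm (t *\<^sub>R y - P) - norm (s *\<^sub>R y - P) \<le> norm ((t *\<^sub>R y - P) - (s *\<^sub>R y - P))"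
    by (rule norm_triangle_ineq2)
  also have "\<dots> = t - s"
    using y st by (simp add: scaleR_diff_left[symmetric])
  finally have "- \<kappa> * (norm (t *\<^sub>R y - P) - norm (s *\<^sub>R y - P)) \<le> - \<kappa> * (t - s)"
    using \<kappa> by (intro mult_left_mono) auto
  also have "\<dots> \<le> t - s"
    using \<kappa> st by (intro mult_left_le_one_le) auto
  finally show ?thesis
    using y st by (simp add: oval_level_def algebra_simps)
qed

lemma oval_level_ray_mono_large:
  fixes y P :: "'a::real_inner"
  assumes \<kappa>: "\<kappa> \<le> 0" and y: "norm y = 1" and st: "0 \<le> s" "s \<le> t"
    and bound: "- \<kappa> * (t + s - 2 * (y \<bullet> P)) \<le> norm (t *\<^sub>R y - P) + norm (s *\<^sub>R y - P)"
  shows "oval_level \<kappa> P (s *\<^sub>R y) \<le> oval_level \<kappa> P (t *\<^sub>R y)"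
proof -
  define dt where "dt = norm (t *\<^sub>R y - P)"
  define ds where "ds = norm (s *\<^sub>R y - P)"
  have "- \<kappa> * (dt - ds) \<le> t - s"
  proof (cases "dt \<le> ds")
    case True
    then have "- \<kappa> * (dt - ds) \<le> 0"
      using \<kappa> by (intro mult_nonneg_nonpos) auto
    then show ?thesis
      using st by linarith
  next
    case False
    then have pos: "0 < dt + ds"
      using norm_ge_zero[of "s *\<^sub>R y - P"] unfolding ds_def by linarith
    have "- \<kappa> * (dt - ds) * (dt + ds) = - \<kappa> * (dt^2 - ds^2)"
      by (simp add: power2_eq_square algebra_simps)
    also have "dt^2 - ds^2 = (t - s) * (t + s - 2 * (y \<bullet> P))"
      unfolding dt_def ds_def norm_scaleR_diff_sq[OF y]
      by (simp add: power2_eq_square algebra_simps)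
    also have "- \<kappa> * \<dots> = (t - s) * (- \<kappa> * (t + s - 2 * (y \<bullet> P)))"
      by simp
    also have "\<dots> \<le> (t - s) * (dt + ds)"
      using bound st by (intro mult_left_mono) (auto simp: dt_def ds_def)
    finally show ?thesis
      using pos by (rule mult_right_le_imp_le)
  qed
  then show ?thesis
    using y st by (simp add: oval_level_def dt_def ds_def algebra_simps)
qed

section \<open>Critical points on radial graphs\<close>

lemma has_derivative_oval_level:
  fixes X P :: "'a::real_inner"
  assumes "X \<noteq> 0" "X \<noteq> P"
  shows "(oval_level \<kappa> P has_derivative (\<lambda>k. oval_normal \<kappa> P X \<bullet> k)) (at X)"
proof -
  have "((\<lambda>X. norm X + \<kappa> * norm (X - P)) has_derivative
      (\<lambda>k. k \<bullet> sgn X + \<kappa> * ((k - 0) \<bullet> sgn (X - P)))) (at X)"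
    using assms
    by (intro has_derivative_add has_derivative_norm has_derivative_mult_right
        has_derivative_compose[OF has_derivative_diff[OF has_derivative_ident has_derivative_const]])
      auto
  moreover have "oval_normal \<kappa> P X \<bullet> k = k \<bullet> sgn X + \<kappa> * ((k - 0) \<bullet> sgn (X - P))" for k
    by (simp add: oval_normal_def inner_commute[of _ k] inner_add_right)
  ultimately show ?thesis
    unfolding oval_level_def[abs_def] by simp
qed

lemma oval_normal_radial:
  fixes y P :: "'a::real_inner"
  assumes "norm y = 1" "0 < t"
  shows "oval_normal \<kappa> P (t *\<^sub>R y) = y + \<kappa> *\<^sub>R sgn (t *\<^sub>R y - P)"
  using assms by (simp add: oval_normal_def sgn_scaleR sgn_div_norm)

lemma has_derivative_normalize:
  fixes x :: "'a::real_inner"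
  assumes "norm x = 1"
  shows "((\<lambda>y. y /\<^sub>R norm y) has_derivative (\<lambda>h. h - (h \<bullet> x) *\<^sub>R x)) (at x)"
proof -
  have "x \<noteq> 0"
    using assms by auto
  then have "((\<lambda>y. y /\<^sub>R norm y) has_derivative (\<lambda>h. inverse (norm x) *\<^sub>R h
      + (- (inverse (norm x) * (h \<bullet> sgn x) * inverse (norm x))) *\<^sub>R x)) (at x)"
    by (intro has_derivative_scaleR[OF Deriv.has_derivative_inverse[OF _ has_derivative_norm]
          has_derivative_ident]) simp_all
  then show ?thesis
    using assms by (simp add: sgn_div_norm)
qed

lemma openin_sphere_radial_nhd:
  fixes \<Omega> :: "'a::real_normed_vector set"
  assumes \<Omega>: "openin (top_of_set (sphere 0 1)) \<Omega>" and x: "x \<in> \<Omega>"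
  obtains S where "open S" "x \<in> S" "\<And>y. y \<in> S \<Longrightarrow> y /\<^sub>R norm y \<in> \<Omega>"
proof -
  obtain T where T: "open T" "\<Omega> = sphere 0 1 \<inter> T"
    using \<Omega> unfolding openin_open by blast
  then have nx: "norm x = 1"
    using x by simp
  define S where "S = ball x 1 \<inter> (\<lambda>y. y /\<^sub>R norm y) -` T"
  have "continuous_on (ball x 1) (\<lambda>y. y /\<^sub>R norm y)"
    using nx by (intro continuous_intros) (auto simp: dist_norm)
  then have "open S"
    unfolding S_def using T(1) by (intro continuous_open_preimage) auto
  moreover have "x \<in> S"
    using x T nx by (simp add: S_def)
  moreover have "y /\<^sub>R norm y \<in> \<Omega>" if "y \<in> S" for y
  proof -
    have "y \<noteq> 0"
      using that nx by (auto simp: S_def dist_norm)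
    then show ?thesis
      using that T by (simp add: S_def)
  qed
  ultimately show thesis
    using that by blast
qed

lemma radial_extremum_tangential:
  fixes \<Omega> :: "'a::euclidean_space set" and \<Phi> :: "'a \<Rightarrow> real"
  assumes \<Omega>: "openin (top_of_set (sphere 0 1)) \<Omega>" and x: "x \<in> \<Omega>"
    and d\<rho>: "((\<lambda>y. \<rho> (y /\<^sub>R norm y)) has_derivative f') (at x)"
    and d\<Phi>: "(\<Phi> has_derivative \<Phi>') (at (\<rho> x *\<^sub>R x))"
    and extremum: "(\<forall>y\<in>\<Omega>. \<Phi> (\<rho> y *\<^sub>R y) \<le> \<Phi> (\<rho> x *\<^sub>R x))
      \<or> (\<forall>y\<in>\<Omega>. \<Phi> (\<rho> x *\<^sub>R x) \<le> \<Phi> (\<rho> y *\<^sub>R y))"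
    and h: "x \<bullet> h = 0"
  shows "\<Phi>' (\<rho> x *\<^sub>R h + f' h *\<^sub>R x) = 0"
proof -
  define N where "N y = y /\<^sub>R norm y" for y :: 'a
  have nx: "norm x = 1"
    using openin_imp_subset[OF \<Omega>] x by auto
  then have Nx: "N x = x"
    by (simp add: N_def)
  obtain S where S: "open S" "x \<in> S" and SN: "\<And>y. y \<in> S \<Longrightarrow> N y \<in> \<Omega>"
    using openin_sphere_radial_nhd[OF \<Omega> x] unfolding N_def by blast
  have "((\<lambda>y. \<Phi> (\<rho> (N y) *\<^sub>R N y)) has_derivative
      (\<lambda>h. \<Phi>' (\<rho> (N x) *\<^sub>R (h - (h \<bullet> x) *\<^sub>R x) + f' h *\<^sub>R N x))) (at x)"
    using has_derivative_compose[OF has_derivative_scaleR[OF d\<rho> has_derivative_normalize[OF nx]]]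
      d\<Phi> by (simp add: N_def[abs_def] Nx[unfolded N_def])
  moreover have "(\<forall>y\<in>S. \<Phi> (\<rho> (N y) *\<^sub>R N y) \<le> \<Phi> (\<rho> (N x) *\<^sub>R N x))
      \<or> (\<forall>y\<in>S. \<Phi> (\<rho> (N x) *\<^sub>R N x) \<le> \<Phi> (\<rho> (N y) *\<^sub>R N y))"
    using extremum SN unfolding Nx by fast
  ultimately have "(\<lambda>h. \<Phi>' (\<rho> (N x) *\<^sub>R (h - (h \<bullet> x) *\<^sub>R x) + f' h *\<^sub>R N x)) = (\<lambda>h. 0)"
    using S by (intro differential_zero_maxmin)
  then have "\<Phi>' (\<rho> x *\<^sub>R (h - (h \<bullet> x) *\<^sub>R x) + f' h *\<^sub>R x) = 0"
    unfolding Nx by meson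
  then show ?thesis
    using h by (simp add: inner_commute)
qed

lemma parallel_of_tangential_equation:
  fixes x w1 w2 :: "'a::real_inner"
  assumes "w1 \<bullet> x \<noteq> 0" "w2 \<bullet> x \<noteq> 0" "r \<noteq> 0"
    and "\<And>h. x \<bullet> h = 0 \<Longrightarrow> r * (w1 \<bullet> h) + f h * (w1 \<bullet> x) = 0"
    and "\<And>h. x \<bullet> h = 0 \<Longrightarrow> r * (w2 \<bullet> h) + f h * (w2 \<bullet> x) = 0"
  shows "w1 = ((w1 \<bullet> x) / (w2 \<bullet> x)) *\<^sub>R w2"
proof -
  define u1 where "u1 = (1 / (w1 \<bullet> x)) *\<^sub>R w1"
  define u2 where "u2 = (1 / (w2 \<bullet> x)) *\<^sub>R w2"
  define d where "d = u1 - u2"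
  have "x \<bullet> d = 0"
    using assms(1,2) by (simp add: d_def u1_def u2_def inner_diff_right inner_commute)
  then have "r * (w1 \<bullet> d) + f d * (w1 \<bullet> x) = 0" and "r * (w2 \<bullet> d) + f d * (w2 \<bullet> x) = 0"
    using assms(4,5) by simp_all
  then have "u1 \<bullet> d = - f d / r" and "u2 \<bullet> d = - f d / r"
    using assms(1-3) by (simp_all add: u1_def u2_def field_simps)
  then have "d \<bullet> d = 0"
    by (simp add: d_def inner_diff_left)
  then have "(w1 \<bullet> x) *\<^sub>R u1 = (w1 \<bullet> x) *\<^sub>R u2"
    by (simp add: d_def)
  then show ?thesis
    using assms(1,2) by (simp add: u1_def u2_def)
qed

lemma norm_unit_combination_sq:
  fixes x e :: "'a::real_inner"
  assumes "norm x = 1" "norm e = 1"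
  shows "(norm (x + \<kappa> *\<^sub>R e))^2 = 2 * ((x + \<kappa> *\<^sub>R e) \<bullet> x) - 1 + \<kappa>^2"
proof -
  have "(norm (x + \<kappa> *\<^sub>R e))^2 = (x + \<kappa> *\<^sub>R e) \<bullet> (x + \<kappa> *\<^sub>R e)"
    by (simp only: power2_norm_eq_inner)
  also have "\<dots> = x \<bullet> x + 2 * \<kappa> * (e \<bullet> x) + \<kappa>^2 * (e \<bullet> e)"
    by (simp add: inner_add_left inner_add_right inner_commute power2_eq_square algebra_simps)
  finally have "(norm (x + \<kappa> *\<^sub>R e))^2 = x \<bullet> x + 2 * \<kappa> * (e \<bullet> x) + \<kappa>^2 * (e \<bullet> e)" .
  moreover have "x \<bullet> x = 1" "e \<bullet> e = 1"
    using assms by (simp_all add: norm_eq_1)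
  ultimately show ?thesis
    by (simp add: inner_add_left)
qed

lemma unit_combination_parallel_eq:
  fixes x e1 e2 :: "'a::real_inner"
  assumes x: "norm x = 1" and e: "norm e1 = 1" "norm e2 = 1" and "\<kappa> \<noteq> 0" "0 < c"
    and parallel: "x + \<kappa> *\<^sub>R e1 = c *\<^sub>R (x + \<kappa> *\<^sub>R e2)"
    and pos: "0 < (x + \<kappa> *\<^sub>R e2) \<bullet> x"
    and large: "1 < \<kappa>^2 \<or> (1 < (x + \<kappa> *\<^sub>R e1) \<bullet> x \<and> 1 < (x + \<kappa> *\<^sub>R e2) \<bullet> x)"
  shows "e1 = e2"
proof -
  define a1 where "a1 = (x + \<kappa> *\<^sub>R e1) \<bullet> x"
  define a2 where "a2 = (x + \<kappa> *\<^sub>R e2) \<bullet> x"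
  have a1: "a1 = c * a2"
    unfolding a1_def a2_def parallel by simp
  have "(norm (x + \<kappa> *\<^sub>R e1))^2 = c^2 * (norm (x + \<kappa> *\<^sub>R e2))^2"
    unfolding parallel using \<open>0 < c\<close> by (simp add: power_mult_distrib)
  then have "2 * (c * a2) - 1 + \<kappa>^2 = c^2 * (2 * a2 - 1 + \<kappa>^2)"
    using norm_unit_combination_sq[OF x e(1)] norm_unit_combination_sq[OF x e(2)] a1
    by (simp add: a1_def a2_def)
  then have "(1 - c) * ((1 - \<kappa>^2) * (1 + c) - 2 * c * a2) = 0"
    by (simp add: power2_eq_square algebra_simps)
  moreover have "(1 - \<kappa>^2) * (1 + c) \<noteq> 2 * c * a2"
  proof
    assume eq: "(1 - \<kappa>^2) * (1 + c) = 2 * c * a2"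
    show False
      using large
    proof
      assume "1 < \<kappa>^2"
      then have "(1 - \<kappa>^2) * (1 + c) < 0"
        using \<open>0 < c\<close> by (intro mult_neg_pos) auto
      moreover have "0 < 2 * c * a2"
        using \<open>0 < c\<close> pos by (simp add: a2_def)
      ultimately show False
        using eq by linarith
    next
      assume "1 < (x + \<kappa> *\<^sub>R e1) \<bullet> x \<and> 1 < (x + \<kappa> *\<^sub>R e2) \<bullet> x"
      then have a: "1 < a1 \<and> 1 < a2"
        by (simp add: a1_def a2_def)
      have "0 < \<kappa>^2 * (1 + c)"
        using \<open>\<kappa> \<noteq> 0\<close> \<open>0 < c\<close> by simp
      then have "(1 - \<kappa>^2) * (1 + c) < 1 + c"
        by (simp add: algebra_simps)
      moreover have "2 * c < 2 * c * a2" and "2 < 2 * c * a2"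
        using a a1 \<open>0 < c\<close> by simp_all
      ultimately show False
        using eq by linarith
    qed
  qed
  ultimately have "c = 1"
    by simp
  then show ?thesis
    using parallel \<open>\<kappa> \<noteq> 0\<close> by simp
qed

section \<open>Consequences of the standing hypotheses\<close>

lemma inner_le_of_direction_bound:
  fixes y P :: "'a::real_inner"
  assumes "\<kappa> < 0" "P \<noteq> 0" "c + 1/\<kappa> \<le> y \<bullet> (P /\<^sub>R norm P)"
  shows "\<kappa> * (y \<bullet> P) \<le> \<kappa> * c * norm P + norm P"
proof -
  have "c + 1/\<kappa> \<le> (y \<bullet> P) / norm P"
    using assms(3) by (simp add: divide_inverse mult.commute)
  then have "(c + 1/\<kappa>) * norm P \<le> y \<bullet> P"
    using assms(2) by (simp add: le_divide_eq)
  then have "\<kappa> * (y \<bullet> P) \<le> \<kappa> * ((c + 1/\<kappa>) * norm P)"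
    using assms(1) by (intro mult_left_mono_neg) auto
  also have "\<dots> = \<kappa> * c * norm P + norm P"
    using assms(1) by (simp add: field_simps)
  finally show ?thesis .
qed

lemma setting1_radius_bound:
  assumes "setting1 \<kappa> \<Omega> D r0" "P \<in> closure D"
  obtains \<tau> where "0 < \<tau>" "\<forall>x\<in>closure \<Omega>. \<tau> + 1/\<kappa> \<le> x \<bullet> (P /\<^sub>R norm P)"
    "(1 - \<kappa>) * r0 < - \<kappa> * \<tau> * norm P" "r0 < norm P"
proof -
  obtain \<tau> where \<kappa>: "\<kappa> < -1" and \<tau>: "0 < \<tau>" "\<tau> < 1 - 1/\<kappa>"
    and inner: "\<forall>x\<in>closure \<Omega>. \<forall>P\<in>closure D. \<tau> + 1/\<kappa> \<le> x \<bullet> (P /\<^sub>R norm P)"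
    and r0: "r0 < \<tau>^2 * \<kappa>^2 / ((1 + sqrt 2)^2 * (1 - \<kappa>)^2) * (INF P\<in>closure D. norm P)"
    using assms(1) unfolding setting1_def by blast
  define q where "q = - \<kappa> * \<tau> / (1 - \<kappa>)"
  have "- \<kappa> * \<tau> < - \<kappa> * (1 - 1/\<kappa>)"
    using \<kappa> \<tau> by (intro mult_strict_left_mono) auto
  also have "\<dots> = 1 - \<kappa>"
    using \<kappa> by (simp add: field_simps)
  finally have "- \<kappa> * \<tau> / (1 - \<kappa>) < 1"
    using \<kappa> by (subst pos_divide_less_eq) auto
  moreover have "0 < - \<kappa> * \<tau> / (1 - \<kappa>)"
    using \<kappa> \<tau> by (intro divide_pos_pos mult_pos_pos) auto
  ultimately have q: "0 < q" "q < 1"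
    by (simp_all only: q_def)
  have "1 \<le> (1 + sqrt 2)^2"
    by (simp add: one_le_power)
  then have "q^2 \<le> q^2 * (1 + sqrt 2)^2"
    using mult_left_mono[of 1 "(1 + sqrt 2)^2" "q^2"] by simp
  then have "q^2 / (1 + sqrt 2)^2 \<le> q^2"
    by (simp add: divide_le_eq)
  also have "\<dots> \<le> q"
    using q by (simp add: power2_eq_square)
  finally have "q^2 / (1 + sqrt 2)^2 \<le> q" .
  have INF: "(INF P\<in>closure D. norm P) \<le> norm P" "0 \<le> (INF P\<in>closure D. norm P)"
    using assms(2) by (auto intro!: cINF_lower cINF_greatest bdd_belowI[where m=0])
  have "\<tau>^2 * \<kappa>^2 / ((1 + sqrt 2)^2 * (1 - \<kappa>)^2) = q^2 / (1 + sqrt 2)^2"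
    using \<kappa> by (simp add: q_def power_divide power_mult_distrib field_simps)
  with r0 have "r0 < q^2 / (1 + sqrt 2)^2 * (INF P\<in>closure D. norm P)"
    by simp
  also have "\<dots> \<le> q * (INF P\<in>closure D. norm P)"
    using \<open>q^2 / (1 + sqrt 2)^2 \<le> q\<close> INF by (intro mult_right_mono) auto
  also have "\<dots> \<le> q * norm P"
    using q INF by (intro mult_left_mono) auto
  finally have "r0 < q * norm P" .
  then have "(1 - \<kappa>) * r0 < (1 - \<kappa>) * (q * norm P)"
    using \<kappa> by simp
  moreover have "(1 - \<kappa>) * (q * norm P) = - \<kappa> * \<tau> * norm P"
    using \<kappa> by (simp add: q_def)
  moreover have "q * norm P \<le> norm P"
    using q by (simp add: mult_left_le_one_le)
  ultimately show thesis
    using that \<tau> inner assms(2) \<open>r0 < q * norm P\<close> by auto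
qed

lemma setting2_radius_bound:
  assumes "setting2 \<kappa> \<Omega> D r0" "P \<in> closure D" "x \<in> closure \<Omega>"
  shows "r0 < x \<bullet> P"
proof -
  obtain \<tau> where \<kappa>: "-1 < \<kappa>" "\<kappa> < 0" and \<tau>: "0 < \<tau>"
    and inner: "\<forall>x\<in>closure \<Omega>. \<forall>P\<in>closure D. (\<tau> - \<kappa>) * norm P \<le> x \<bullet> P"
    and r0: "r0 < \<tau> / (1 - \<kappa>) * infdist 0 (closure D)"
    using assms(1) unfolding setting2_def by blast
  have "\<tau> / (1 - \<kappa>) \<le> \<tau>"
    using \<kappa> \<tau> by (simp add: divide_le_eq mult_le_cancel_left1)
  then have "\<tau> / (1 - \<kappa>) * infdist 0 (closure D) \<le> \<tau> * norm P"
    using infdist_le[OF assms(2), of 0] \<tau> infdist_nonneg[of 0 "closure D"]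
    by (intro mult_mono) auto
  also have "\<dots> \<le> (\<tau> - \<kappa>) * norm P"
    using \<kappa> by (intro mult_right_mono) auto
  also have "\<dots> \<le> x \<bullet> P"
    using inner assms(2,3) by blast
  finally show ?thesis
    using r0 by linarith
qed

locale refraction_setting =
  fixes \<Omega> D :: "'a::euclidean_space set" and \<kappa> r0 :: real
  assumes standing: "standing \<Omega> D"
    and setting: "setting1 \<kappa> \<Omega> D r0 \<or> setting2 \<kappa> \<Omega> D r0"
begin

lemma setting_cases:
  obtains "\<kappa> < -1" "setting1 \<kappa> \<Omega> D r0" | "-1 < \<kappa>" "\<kappa> < 0" "setting2 \<kappa> \<Omega> D r0"
  using setting unfolding setting1_def setting2_def by blast

lemma kappa_neg: "\<kappa> < 0"
  by (cases rule: setting_cases) auto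

lemma r0_pos: "0 < r0"
  using setting unfolding setting1_def setting2_def by blast

lemma kappa_sq_ne_1: "\<kappa>^2 \<noteq> 1"
  using kappa_neg by (cases rule: setting_cases) (auto simp: power2_eq_1_iff)

lemma norm_closure_Omega:
  assumes "y \<in> closure \<Omega>"
  shows "norm y = 1"
proof -
  have "closure \<Omega> \<subseteq> sphere 0 1"
    using standing unfolding standing_def by (meson closed_sphere closure_minimal)
  then show ?thesis
    using assms by auto
qed

lemma focus_nonzero: "P \<in> closure D \<Longrightarrow> P \<noteq> 0"
  using standing unfolding standing_def by auto

lemma r0_less_norm_focus:
  assumes "P \<in> closure D"
  shows "r0 < norm P"
proof (cases rule: setting_cases)
  case 1
  then show ?thesis
    using setting1_radius_bound[OF _ assms] by metis
next
  case 2
  obtain y where "y \<in> closure \<Omega>"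
    using standing unfolding standing_def by (meson closure_subset ex_in_conv subsetD)
  then have "r0 < y \<bullet> P" and "y \<bullet> P \<le> norm P"
    using setting2_radius_bound[OF 2(3) assms] Cauchy_Schwarz_ineq2[of y P] norm_closure_Omega
    by auto
  then show ?thesis
    by linarith
qed

lemma kappa_inner_le_norm:
  assumes y: "y \<in> closure \<Omega>" and P: "P \<in> closure D"
  shows "\<kappa> * (y \<bullet> P) \<le> norm P"
proof (cases rule: setting_cases)
  case 1
  then obtain \<tau> where "0 < \<tau>" "\<tau> + 1/\<kappa> \<le> y \<bullet> (P /\<^sub>R norm P)"
    using setting1_radius_bound[OF _ P] y by metis
  then have "\<kappa> * (y \<bullet> P) \<le> \<kappa> * \<tau> * norm P + norm P"
    using 1 focus_nonzero[OF P] by (intro inner_le_of_direction_bound) auto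
  also have "\<dots> \<le> norm P"
    using 1 \<open>0 < \<tau>\<close> by (simp add: mult_nonpos_nonneg)
  finally show ?thesis .
next
  case 2
  then have "0 < y \<bullet> P"
    using setting2_radius_bound[OF 2(3) P y] r0_pos by linarith
  then show ?thesis
    using 2 mult_neg_pos[of \<kappa> "y \<bullet> P"] norm_ge_zero[of P] by linarith
qed

lemma ray_bound_large:
  assumes \<kappa>: "\<kappa> < -1" and y: "y \<in> closure \<Omega>" and P: "P \<in> closure D"
    and st: "0 \<le> s" "s \<le> r0" "0 \<le> t" "t \<le> r0"
  shows "- \<kappa> * (t + s - 2 * (y \<bullet> P)) < norm (t *\<^sub>R y - P) + norm (s *\<^sub>R y - P)"
proof -
  have "setting1 \<kappa> \<Omega> D r0"
    using \<kappa> by (cases rule: setting_cases) auto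
  then obtain \<tau> where inner: "\<tau> + 1/\<kappa> \<le> y \<bullet> (P /\<^sub>R norm P)"
    and r0: "(1 - \<kappa>) * r0 < - \<kappa> * \<tau> * norm P"
    using setting1_radius_bound[OF _ P] y by metis
  have lower: "norm P - r \<le> norm (r *\<^sub>R y - P)" if "0 \<le> r" for r
    using norm_triangle_ineq2[of P "r *\<^sub>R y"] norm_closure_Omega[OF y] that
    by (simp add: norm_minus_commute)
  have sum: "2 * norm P - 2 * r0 \<le> norm (t *\<^sub>R y - P) + norm (s *\<^sub>R y - P)"
    using lower[of t] lower[of s] st by linarith
  have "\<kappa> * (y \<bullet> P) \<le> \<kappa> * \<tau> * norm P + norm P"
    using \<kappa> inner focus_nonzero[OF P] by (intro inner_le_of_direction_bound) auto
  moreover have "- \<kappa> * (t + s) \<le> - \<kappa> * (2 * r0)"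
    using st \<kappa> by (intro mult_left_mono) auto
  ultimately have "- \<kappa> * (t + s - 2 * (y \<bullet> P)) < 2 * norm P - 2 * r0"
    using r0 by (simp add: algebra_simps)
  then show ?thesis
    using sum by linarith
qed

lemma ray_point_ne_focus:
  assumes "y \<in> closure \<Omega>" "P \<in> closure D" "0 \<le> t" "t \<le> r0"
  shows "t *\<^sub>R y \<noteq> P"
  using r0_less_norm_focus[OF assms(2)] norm_closure_Omega[OF assms(1)] assms(3,4) by auto

lemma focus_unique_on_ray:
  assumes X: "X \<in> cone_r \<Omega> r0" and P: "P1 \<in> closure D" "P2 \<in> closure D"
    and ne: "X \<noteq> P1" "X \<noteq> P2" and dir: "sgn (X - P1) = sgn (X - P2)"
  shows "P1 = P2"
proof -
  define m where "m = - sgn (X - P1)"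
  define R where "R = closure D \<inter> {X + t *\<^sub>R m | t. t \<ge> 0}"
  have "m \<in> sphere 0 1"
    using ne(1) by (simp add: m_def norm_sgn)
  then have "card R \<le> 1" "finite R"
    using setting X unfolding R_def setting1_def setting2_def ray_condition_def by blast+
  moreover have "P \<in> R" if "P \<in> closure D" "X \<noteq> P" "sgn (X - P) = - m" for P
  proof -
    have "X - P = norm (X - P) *\<^sub>R sgn (X - P)"
      using that(2) by (simp add: sgn_div_norm)
    then have "P = X + norm (X - P) *\<^sub>R m"
      using that(3) by (simp add: algebra_simps)
    then show ?thesis
      using that(1) unfolding R_def by auto
  qed
  then have "P1 \<in> R" "P2 \<in> R"
    using P ne dir by (auto simp: m_def)
  ultimately show ?thesis
    by (auto simp: card_le_Suc0_iff_eq)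
qed

lemma r0_less_inner_small:
  assumes "\<not> \<kappa> < -1" "y \<in> closure \<Omega>" "P \<in> closure D"
  shows "r0 < y \<bullet> P"
  using assms setting2_radius_bound by (cases rule: setting_cases) auto

lemma oval_normal_inner_pos:
  assumes y: "y \<in> closure \<Omega>" and P: "P \<in> closure D" and t: "0 < t" "t \<le> r0"
  shows "0 < oval_normal \<kappa> P (t *\<^sub>R y) \<bullet> y"
    and "\<not> \<kappa> < -1 \<Longrightarrow> 1 < oval_normal \<kappa> P (t *\<^sub>R y) \<bullet> y"
proof -
  define d where "d = norm (t *\<^sub>R y - P)"
  have ny: "norm y = 1"
    by (rule norm_closure_Omega[OF y])
  have d0: "0 < d"
    using ray_point_ne_focus[OF y P] t by (simp add: d_def)
  have "y \<bullet> y = 1"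
    using ny by (simp add: norm_eq_1)
  then have "(t *\<^sub>R y - P) \<bullet> y = t - y \<bullet> P"
    by (simp add: inner_diff_left inner_commute[of P y])
  then have normal: "oval_normal \<kappa> P (t *\<^sub>R y) \<bullet> y = 1 + \<kappa> * ((t - y \<bullet> P) / d)"
    using ny t by (simp add: oval_normal_radial sgn_div_norm inner_add_left d_def
        power2_norm_eq_inner[symmetric] divide_inverse mult.commute)
  show small: "1 < oval_normal \<kappa> P (t *\<^sub>R y) \<bullet> y" if "\<not> \<kappa> < -1"
  proof -
    have "t < y \<bullet> P"
      using r0_less_inner_small[OF that y P] t by linarith
    then have "0 < \<kappa> * ((t - y \<bullet> P) / d)"
      using kappa_neg d0 by (intro mult_neg_neg) (auto simp: divide_neg_pos)
    then show ?thesis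
      unfolding normal by simp
  qed
  show "0 < oval_normal \<kappa> P (t *\<^sub>R y) \<bullet> y"
  proof (cases "\<kappa> < -1")
    case True
    have "- \<kappa> * (t + t - 2 * (y \<bullet> P)) < d + d"
      using ray_bound_large[OF True y P, of t t] t unfolding d_def by simp
    then have "- \<kappa> * (t - y \<bullet> P) / d < 1"
      using d0 by (simp add: algebra_simps)
    then show ?thesis
      unfolding normal by simp
  qed (use small in simp)
qed

end

section \<open>Supporting ovals\<close>

lemma supports_imp_eq_h2: "supports \<kappa> \<Omega> \<rho> P b x \<Longrightarrow> \<rho> x = h2 \<kappa> x P b"
  unfolding supports_def h1_eq_h2 by (auto split: if_splits)

lemma supports_tendsto:
  fixes \<sigma> :: "nat \<Rightarrow> 'a::euclidean_space \<Rightarrow> real"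
  assumes P: "Pn \<longlonglongrightarrow> P" "P \<noteq> 0" and b: "bn \<longlonglongrightarrow> b" and "\<kappa> \<noteq> 0" and x: "x \<in> closure \<Omega>"
    and conv: "\<And>y. y \<in> closure \<Omega> \<Longrightarrow> (\<lambda>n. \<sigma> n y) \<longlonglongrightarrow> \<rho> y"
    and supp: "\<And>n. supports \<kappa> \<Omega> (\<sigma> n) (Pn n) (bn n) x"
  shows "supports \<kappa> \<Omega> \<rho> P b x"
proof -
  note h = h2_tendsto[OF P(1) b]
  have "(\<lambda>n. \<sigma> n x) = (\<lambda>n. h2 \<kappa> x (Pn n) (bn n))"
    using supports_imp_eq_h2[OF supp] by simp
  then have rho_x: "\<rho> x = h2 \<kappa> x P b"
    using conv[OF x] h[of \<kappa> x] by (metis LIMSEQ_unique)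
  show ?thesis
  proof (cases "\<kappa> < -1")
    case True
    have "h2 \<kappa> y P b \<le> \<rho> y" if "y \<in> closure \<Omega>" for y
      using supp \<open>\<kappa> < -1\<close> that
      by (intro tendsto_le[OF trivial_limit_sequentially conv[OF that] h])
        (auto simp: supports_def h1_eq_h2 intro!: always_eventually)
    moreover have "I1 \<kappa> P b \<le> y \<bullet> (P /\<^sub>R norm P)" if "y \<in> closure \<Omega>" for y
    proof (rule tendsto_le[OF trivial_limit_sequentially _ I1_tendsto[OF P(1) b P(2) \<open>\<kappa> \<noteq> 0\<close>]])
      show "(\<lambda>n. y \<bullet> (Pn n /\<^sub>R norm (Pn n))) \<longlonglongrightarrow> y \<bullet> (P /\<^sub>R norm P)"
        using P by (intro tendsto_intros) auto
      show "\<forall>\<^sub>F n in sequentially. I1 \<kappa> (Pn n) (bn n) \<le> y \<bullet> (Pn n /\<^sub>R norm (Pn n))"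
        using supp \<open>\<kappa> < -1\<close> that by (auto simp: supports_def intro!: always_eventually)
    qed
    moreover have "closure \<Omega> \<subseteq> sphere 0 1"
      using supp[of 0] True by (auto simp: supports_def)
    ultimately show ?thesis
      using True rho_x by (auto simp: supports_def h1_eq_h2)
  next
    case False
    have "\<rho> y \<le> h2 \<kappa> y P b" if "y \<in> closure \<Omega>" for y
      using supp \<open>\<not> \<kappa> < -1\<close> that
      by (intro tendsto_le[OF trivial_limit_sequentially h conv[OF that]])
        (auto simp: supports_def intro!: always_eventually)
    then show ?thesis
      using False rho_x by (simp add: supports_def)
  qed
qed

lemma near_field_refractor_iff:
  "near_field_refractor \<kappa> \<Omega> D r0 \<rho> \<longleftrightarrow>
     {\<rho> x *\<^sub>R x | x. x \<in> closure \<Omega>} \<subseteq> cone_r \<Omega> r0 \<and>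
     (\<forall>x\<in>closure \<Omega>. refractor_map \<kappa> \<Omega> D \<rho> x \<noteq> {})"
  unfolding near_field_refractor_def refractor_map_def by blast

lemma mem_trace_map:
  "x \<in> trace_map \<kappa> \<Omega> D \<rho> F \<longleftrightarrow> x \<in> closure \<Omega> \<and> refractor_map \<kappa> \<Omega> D \<rho> x \<inter> F \<noteq> {}"
  unfolding trace_map_def by blast

locale radial_surface = refraction_setting +
  fixes \<rho> :: "'a::euclidean_space \<Rightarrow> real"
  assumes radius_bounds: "\<And>y. y \<in> closure \<Omega> \<Longrightarrow> 0 < \<rho> y \<and> \<rho> y \<le> r0"
begin

lemma supports_norm_focus_imp_ge:
  assumes x: "x \<in> closure \<Omega>" and P: "P \<in> closure D" and supp: "supports \<kappa> \<Omega> \<rho> P (norm P) x"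
  shows "norm P \<le> \<rho> x"
proof -
  have inner: "x \<bullet> P \<le> norm P"
    using Cauchy_Schwarz_ineq2[of x P] norm_closure_Omega[OF x] by simp
  have "norm P \<le> h2 \<kappa> x P (norm P)"
  proof (cases rule: setting_cases)
    case 1
    then have "1 < \<kappa>^2"
      using less_1_mult[of "-\<kappa>" "-\<kappa>"] by (simp add: power2_eq_square)
    then have "1 \<le> x \<bullet> (P /\<^sub>R norm P)"
      using supp 1 x I1_right_end[OF _ focus_nonzero[OF P]] by (auto simp: supports_def)
    then have "1 \<le> (x \<bullet> P) / norm P"
      by (simp add: divide_inverse mult.commute)
    then have "x \<bullet> P = norm P"
      using inner focus_nonzero[OF P] by (simp add: le_divide_eq)
    then have "h2 \<kappa> x P (norm P) = norm P"
      by (rule h2_right_end_large[OF kappa_sq_ne_1])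
    then show ?thesis
      by simp
  next
    case 2
    then have "\<kappa>^2 < 1"
      using abs_square_less_1[of \<kappa>] by simp
    then show ?thesis
      using h2_right_end_small inner by blast
  qed
  then show ?thesis
    using supports_imp_eq_h2[OF supp] by simp
qed

lemma supports_parameter_interior:
  assumes x: "x \<in> closure \<Omega>" and P: "P \<in> closure D"
    and b: "\<kappa> * norm P \<le> b" "b \<le> norm P" and supp: "supports \<kappa> \<Omega> \<rho> P b x"
  shows "\<kappa> * norm P < b \<and> b < norm P"
proof -
  have "b \<noteq> \<kappa> * norm P"
  proof
    assume "b = \<kappa> * norm P"
    then have "\<rho> x = 0"
      using supports_imp_eq_h2[OF supp] h2_left_end[OF _ kappa_inner_le_norm[OF x P]] kappa_neg
      by simp
    then show False
      using radius_bounds[OF x] by simp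
  qed
  moreover have "b \<noteq> norm P"
    using supports_norm_focus_imp_ge[OF x P] supp radius_bounds[OF x] r0_less_norm_focus[OF P]
    by fastforce
  ultimately show ?thesis
    using b by simp
qed

lemma limit_in_refractor_map:
  fixes \<tau> :: "nat \<Rightarrow> 'a \<Rightarrow> real"
  assumes conv: "\<And>y. y \<in> closure \<Omega> \<Longrightarrow> (\<lambda>n. \<tau> n y) \<longlonglongrightarrow> \<rho> y" and x: "x \<in> closure \<Omega>"
    and P: "Pn \<longlonglongrightarrow> P" "P \<in> closure D" and b: "bn \<longlonglongrightarrow> b"
    and range: "\<And>n. \<kappa> * norm (Pn n) < bn n \<and> bn n < norm (Pn n)"
    and supp: "\<And>n. supports \<kappa> \<Omega> (\<tau> n) (Pn n) (bn n) x"
  shows "P \<in> refractor_map \<kappa> \<Omega> D \<rho> x"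
proof -
  have "\<kappa> * norm P \<le> b"
    using range by (intro tendsto_le[OF _ b tendsto_mult[OF tendsto_const tendsto_norm[OF P(1)]]])
      (auto intro!: always_eventually less_imp_le)
  moreover have "b \<le> norm P"
    using range by (intro tendsto_le[OF _ tendsto_norm[OF P(1)] b])
      (auto intro!: always_eventually less_imp_le)
  moreover have "supports \<kappa> \<Omega> \<rho> P b x"
    using focus_nonzero[OF P(2)] kappa_neg conv supp
    by (intro supports_tendsto[where \<sigma>=\<tau>, OF P(1) _ b _ x]) auto
  ultimately show ?thesis
    using supports_parameter_interior[OF x P(2)] P(2) unfolding refractor_map_def by blast
qed

lemma supports_oval_extremum:
  assumes x: "x \<in> closure \<Omega>" and P: "P \<in> closure D"
    and b: "\<kappa> * norm P < b" "b < norm P" and supp: "supports \<kappa> \<Omega> \<rho> P b x"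
  shows "(\<forall>y\<in>closure \<Omega>. oval_level \<kappa> P (\<rho> y *\<^sub>R y) \<le> oval_level \<kappa> P (\<rho> x *\<^sub>R x))
    \<or> (\<forall>y\<in>closure \<Omega>. oval_level \<kappa> P (\<rho> x *\<^sub>R x) \<le> oval_level \<kappa> P (\<rho> y *\<^sub>R y))"
proof (cases rule: setting_cases)
  case 1
  have h: "h2 \<kappa> y P b \<le> \<rho> y" "I1 \<kappa> P b \<le> y \<bullet> (P /\<^sub>R norm P)" if "y \<in> closure \<Omega>" for y
    using supp that 1 by (auto simp: supports_def h1_eq_h2)
  have level: "oval_level \<kappa> P (h2 \<kappa> y P b *\<^sub>R y) = b" if y: "y \<in> closure \<Omega>" for y
    using radius_bounds[OF y] h[OF y] r0_less_norm_focus[OF P]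
    by (intro oval_level_h2_large[OF 1(1) norm_closure_Omega[OF y] _ b])
      (auto simp: focus_nonzero[OF P])
  have "oval_level \<kappa> P (\<rho> x *\<^sub>R x) \<le> oval_level \<kappa> P (\<rho> y *\<^sub>R y)" if y: "y \<in> closure \<Omega>" for y
  proof -
    have "oval_level \<kappa> P (\<rho> x *\<^sub>R x) = oval_level \<kappa> P (h2 \<kappa> y P b *\<^sub>R y)"
      using level[OF x] level[OF y] supports_imp_eq_h2[OF supp] by simp
    also have "\<dots> \<le> oval_level \<kappa> P (\<rho> y *\<^sub>R y)"
    proof (rule oval_level_ray_mono_large[OF _ norm_closure_Omega[OF y]])
      show "0 \<le> h2 \<kappa> y P b"
        using h2_nonneg_large[OF 1(1) _ b h(2)[OF y]] focus_nonzero[OF P] by simp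
      then show "- \<kappa> * (\<rho> y + h2 \<kappa> y P b - 2 * (y \<bullet> P))
          \<le> norm (\<rho> y *\<^sub>R y - P) + norm (h2 \<kappa> y P b *\<^sub>R y - P)"
        using ray_bound_large[OF 1(1) y P] radius_bounds[OF y] h(1)[OF y] by (simp add: less_imp_le)
    qed (use 1 h(1)[OF y] in simp_all)
    finally show ?thesis .
  qed
  then show ?thesis
    by blast
next
  case 2
  have "oval_level \<kappa> P (\<rho> y *\<^sub>R y) \<le> oval_level \<kappa> P (\<rho> x *\<^sub>R x)" if y: "y \<in> closure \<Omega>" for y
  proof -
    have h: "\<rho> y \<le> h2 \<kappa> y P b"
      using supp that 2 by (auto simp: supports_def)
    then have "oval_level \<kappa> P (\<rho> y *\<^sub>R y) \<le> oval_level \<kappa> P (h2 \<kappa> y P b *\<^sub>R y)"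
      using 2 radius_bounds[OF y]
      by (intro oval_level_ray_mono_small[OF _ _ norm_closure_Omega[OF y]]) auto
    also have "\<dots> = b"
      using 2 h radius_bounds[OF y]
      by (intro oval_level_h2_small[OF _ _ norm_closure_Omega[OF y]]) auto
    also have "\<dots> = oval_level \<kappa> P (\<rho> x *\<^sub>R x)"
      using oval_level_h2_small[OF 2(1,2) norm_closure_Omega[OF x]] radius_bounds[OF x]
        supports_imp_eq_h2[OF supp] by simp
    finally show ?thesis .
  qed
  then show ?thesis
    by blast
qed

lemma refractor_map_tangential:
  assumes x: "x \<in> \<Omega>" and f': "((\<lambda>y. \<rho> (y /\<^sub>R norm y)) has_derivative f') (at x)"
    and P: "P \<in> refractor_map \<kappa> \<Omega> D \<rho> x" and h: "x \<bullet> h = 0"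
  shows "\<rho> x * (oval_normal \<kappa> P (\<rho> x *\<^sub>R x) \<bullet> h)
    + f' h * (oval_normal \<kappa> P (\<rho> x *\<^sub>R x) \<bullet> x) = 0"
proof -
  have xc: "x \<in> closure \<Omega>"
    using x closure_subset by blast
  obtain b where P': "P \<in> closure D" and b: "\<kappa> * norm P < b" "b < norm P"
    and supp: "supports \<kappa> \<Omega> \<rho> P b x"
    using P by (auto simp: refractor_map_def)
  have "(\<forall>y\<in>\<Omega>. oval_level \<kappa> P (\<rho> y *\<^sub>R y) \<le> oval_level \<kappa> P (\<rho> x *\<^sub>R x))
      \<or> (\<forall>y\<in>\<Omega>. oval_level \<kappa> P (\<rho> x *\<^sub>R x) \<le> oval_level \<kappa> P (\<rho> y *\<^sub>R y))"
    using supports_oval_extremum[OF xc P' b supp] closure_subset by blast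
  moreover have "\<rho> x *\<^sub>R x \<noteq> 0" "\<rho> x *\<^sub>R x \<noteq> P"
    using radius_bounds[OF xc] norm_closure_Omega[OF xc] ray_point_ne_focus[OF xc P'] by auto
  ultimately have "oval_normal \<kappa> P (\<rho> x *\<^sub>R x) \<bullet> (\<rho> x *\<^sub>R h + f' h *\<^sub>R x) = 0"
    using standing h unfolding standing_def
    by (intro radial_extremum_tangential[OF _ x f' has_derivative_oval_level]) auto
  then show ?thesis
    by (simp add: inner_add_right)
qed

lemma refractor_map_unique:
  assumes x: "x \<in> \<Omega>" and diff: "(\<lambda>y. \<rho> (y /\<^sub>R norm y)) differentiable (at x)"
    and P1: "P1 \<in> refractor_map \<kappa> \<Omega> D \<rho> x" and P2: "P2 \<in> refractor_map \<kappa> \<Omega> D \<rho> x"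
  shows "P1 = P2"
proof -
  have xc: "x \<in> closure \<Omega>"
    using x closure_subset by blast
  have nx: "norm x = 1" and \<rho>x: "0 < \<rho> x" "\<rho> x \<le> r0"
    using norm_closure_Omega[OF xc] radius_bounds[OF xc] by auto
  obtain f' where f': "((\<lambda>y. \<rho> (y /\<^sub>R norm y)) has_derivative f') (at x)"
    using diff unfolding differentiable_def by blast
  define X where "X = \<rho> x *\<^sub>R x"
  have focus: "P \<in> closure D" "X \<noteq> P" if "P \<in> refractor_map \<kappa> \<Omega> D \<rho> x" for P
    using that ray_point_ne_focus[OF xc _ _ \<rho>x(2)] \<rho>x(1)
    by (auto simp: refractor_map_def X_def)
  have pos: "0 < oval_normal \<kappa> P X \<bullet> x"
    and small: "\<not> \<kappa> < -1 \<Longrightarrow> 1 < oval_normal \<kappa> P X \<bullet> x"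
    if "P \<in> refractor_map \<kappa> \<Omega> D \<rho> x" for P
    using oval_normal_inner_pos[OF xc focus(1)[OF that] \<rho>x] by (simp_all add: X_def)
  define c where "c = (oval_normal \<kappa> P1 X \<bullet> x) / (oval_normal \<kappa> P2 X \<bullet> x)"
  have c: "0 < c"
    using pos[OF P1] pos[OF P2] by (simp add: c_def)
  have "oval_normal \<kappa> P1 X = c *\<^sub>R oval_normal \<kappa> P2 X"
    unfolding c_def using pos[OF P1] pos[OF P2] \<rho>x
      refractor_map_tangential[OF x f' P1] refractor_map_tangential[OF x f' P2]
    by (intro parallel_of_tangential_equation[where r="\<rho> x" and f=f']) (auto simp: X_def)
  moreover have "oval_normal \<kappa> P X = x + \<kappa> *\<^sub>R sgn (X - P)" for P
    using nx \<rho>x by (simp add: X_def oval_normal_radial)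
  moreover have "norm (sgn (X - P)) = 1" if "P \<in> refractor_map \<kappa> \<Omega> D \<rho> x" for P
    using focus(2)[OF that] by (simp add: norm_sgn)
  moreover have "1 < \<kappa>^2 \<or> (1 < oval_normal \<kappa> P1 X \<bullet> x \<and> 1 < oval_normal \<kappa> P2 X \<bullet> x)"
    using small[OF P1] small[OF P2] less_1_mult[of "-\<kappa>" "-\<kappa>"] by (auto simp: power2_eq_square)
  ultimately have "sgn (X - P1) = sgn (X - P2)"
    using unit_combination_parallel_eq[OF nx _ _ kappa_neg[THEN less_imp_neq] c] pos[OF P2] P1 P2
    by simp
  moreover have "X \<in> cone_r \<Omega> r0"
    using xc \<rho>x unfolding cone_r_def X_def by blast
  ultimately show ?thesis
    using focus_unique_on_ray focus[OF P1] focus[OF P2] by blast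
qed

end

section \<open>Limits of refractors\<close>

lemma frequently_sequentially_reindex:
  assumes "frequently Q sequentially"
  obtains j where "filterlim j sequentially sequentially" "\<And>n. Q (j n)"
proof -
  obtain j where j: "\<forall>N. N \<le> j N \<and> Q (j N)"
    using assms unfolding frequently_sequentially by metis
  then have "filterlim j sequentially sequentially"
    by (intro filterlim_at_top_mono[OF filterlim_ident]) auto
  then show thesis
    using that j by blast
qed

locale radial_limit = radial_surface +
  fixes \<sigma> :: "nat \<Rightarrow> 'a::euclidean_space \<Rightarrow> real"
  assumes pointwise_limit: "\<And>y. y \<in> closure \<Omega> \<Longrightarrow> (\<lambda>n. \<sigma> n y) \<longlonglongrightarrow> \<rho> y"
begin

lemma refractor_map_limit:
  assumes x: "x \<in> closure \<Omega>" and S: "compact S" "S \<subseteq> closure D"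
    and freq: "frequently (\<lambda>n. refractor_map \<kappa> \<Omega> D (\<sigma> n) x \<inter> S \<noteq> {}) sequentially"
  shows "refractor_map \<kappa> \<Omega> D \<rho> x \<inter> S \<noteq> {}"
proof -
  obtain j where j: "filterlim j sequentially sequentially"
    and "\<And>n. refractor_map \<kappa> \<Omega> D (\<sigma> (j n)) x \<inter> S \<noteq> {}"
    using frequently_sequentially_reindex[OF freq] by blast
  then obtain Pn bn where Pn: "\<And>n. Pn n \<in> S"
    and bn: "\<And>n. \<kappa> * norm (Pn n) < bn n \<and> bn n < norm (Pn n)"
    and supp: "\<And>n. supports \<kappa> \<Omega> (\<sigma> (j n)) (Pn n) (bn n) x"
    unfolding refractor_map_def by (simp add: ex_in_conv[symmetric]) metis
  obtain M where M: "\<And>P. P \<in> S \<Longrightarrow> norm P \<le> M"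
    using compact_imp_bounded[OF S(1)] bounded_iff by metis
  have "\<kappa> * M \<le> \<kappa> * norm (Pn n)" for n
    using M[OF Pn] kappa_neg by (simp add: mult_left_mono_neg)
  then have "\<kappa> * M \<le> bn n \<and> bn n \<le> M" for n
    using bn[of n] M[OF Pn] by (meson less_imp_le order_trans)
  then have in_box: "\<forall>n. (Pn n, bn n) \<in> S \<times> {\<kappa> * M..M}"
    using Pn by simp
  have box: "compact (S \<times> {\<kappa> * M..M})"
    using S(1) by (intro compact_Times compact_Icc)
  obtain l r where l: "l \<in> S \<times> {\<kappa> * M..M}" and r: "strict_mono r"
    and lim: "((\<lambda>n. (Pn n, bn n)) \<circ> r) \<longlonglongrightarrow> l"
    by (rule seq_compactE[OF compact_imp_seq_compact[OF box] in_box])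
  obtain P b where Pb: "l = (P, b)"
    by fastforce
  have P: "P \<in> S"
    using l Pb by simp
  have "P \<in> refractor_map \<kappa> \<Omega> D \<rho> x"
  proof (rule limit_in_refractor_map[where \<tau>="\<sigma> \<circ> j \<circ> r" and Pn="Pn \<circ> r" and bn="bn \<circ> r"])
    show "(\<lambda>n. (\<sigma> \<circ> j \<circ> r) n y) \<longlonglongrightarrow> \<rho> y" if "y \<in> closure \<Omega>" for y
      using filterlim_compose[OF filterlim_compose[OF pointwise_limit[OF that] j]
          filterlim_subseq[OF r]]
      by (simp add: comp_def)
    show "(Pn \<circ> r) \<longlonglongrightarrow> P" "(bn \<circ> r) \<longlonglongrightarrow> b"
      using tendsto_fst[OF lim] tendsto_snd[OF lim] Pb by (simp_all add: comp_def)
  qed (use x P S(2) bn supp in auto)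
  then show ?thesis
    using P by blast
qed

lemma near_field_refractor_limit:
  assumes refr: "\<And>n. near_field_refractor \<kappa> \<Omega> D r0 (\<sigma> n)"
  shows "near_field_refractor \<kappa> \<Omega> D r0 \<rho>"
  unfolding near_field_refractor_iff
proof (intro conjI ballI)
  show "{\<rho> x *\<^sub>R x | x. x \<in> closure \<Omega>} \<subseteq> cone_r \<Omega> r0"
    using radius_bounds unfolding cone_r_def by blast
  fix x
  assume x: "x \<in> closure \<Omega>"
  have "refractor_map \<kappa> \<Omega> D (\<sigma> n) x \<inter> closure D \<noteq> {}" for n
    using refr[of n] x unfolding near_field_refractor_iff refractor_map_def by blast
  then have "frequently (\<lambda>n. refractor_map \<kappa> \<Omega> D (\<sigma> n) x \<inter> closure D \<noteq> {}) sequentially"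
    by (simp add: always_eventually eventually_frequently)
  moreover have "compact (closure D)"
    using standing unfolding standing_def by blast
  ultimately show "refractor_map \<kappa> \<Omega> D \<rho> x \<noteq> {}"
    using refractor_map_limit[OF x] by blast
qed

lemma limsup_trace_map_subset:
  assumes K: "compact K" "K \<subseteq> closure D"
  shows "limsup (\<lambda>n. trace_map \<kappa> \<Omega> D (\<sigma> n) K) \<subseteq> trace_map \<kappa> \<Omega> D \<rho> K"
proof
  fix x
  assume "x \<in> limsup (\<lambda>n. trace_map \<kappa> \<Omega> D (\<sigma> n) K)"
  then have freq: "frequently (\<lambda>n. x \<in> trace_map \<kappa> \<Omega> D (\<sigma> n) K) sequentially"
    by (simp add: mem_limsup_iff)
  then have x: "x \<in> closure \<Omega>"
    by (auto simp: mem_trace_map frequently_def)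
  have "frequently (\<lambda>n. refractor_map \<kappa> \<Omega> D (\<sigma> n) x \<inter> K \<noteq> {}) sequentially"
    using freq by (rule frequently_elim1) (simp add: mem_trace_map)
  then show "x \<in> trace_map \<kappa> \<Omega> D \<rho> K"
    using refractor_map_limit[OF x K] x by (simp add: mem_trace_map)
qed

lemma refractor_map_eventually_meets:
  assumes refr: "\<And>n. near_field_refractor \<kappa> \<Omega> D r0 (\<sigma> n)"
    and G: "openin (top_of_set (closure D)) G"
    and x: "x \<in> \<Omega>" and diff: "(\<lambda>y. \<rho> (y /\<^sub>R norm y)) differentiable (at x)"
    and P: "P \<in> refractor_map \<kappa> \<Omega> D \<rho> x" "P \<in> G"
  shows "eventually (\<lambda>n. refractor_map \<kappa> \<Omega> D (\<sigma> n) x \<inter> G \<noteq> {}) sequentially"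
proof (rule ccontr)
  assume "\<not> ?thesis"
  then have miss: "frequently (\<lambda>n. refractor_map \<kappa> \<Omega> D (\<sigma> n) x \<inter> G = {}) sequentially"
    by (simp add: not_eventually)
  obtain U where U: "open U" "G = closure D \<inter> U"
    using G unfolding openin_open by blast
  have xc: "x \<in> closure \<Omega>"
    using x closure_subset by blast
  have "refractor_map \<kappa> \<Omega> D (\<sigma> n) x \<noteq> {}" "refractor_map \<kappa> \<Omega> D (\<sigma> n) x \<subseteq> closure D" for n
    using refr[of n] xc unfolding near_field_refractor_iff refractor_map_def by blast+
  with miss have "frequently (\<lambda>n. refractor_map \<kappa> \<Omega> D (\<sigma> n) x \<inter> (closure D - U) \<noteq> {})
      sequentially"
    unfolding U(2) by (elim frequently_elim1) blast
  moreover have "compact (closure D - U)"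
    using standing U(1) unfolding standing_def by (intro compact_diff) auto
  ultimately obtain P' where "P' \<in> refractor_map \<kappa> \<Omega> D \<rho> x" "P' \<notin> U"
    using refractor_map_limit[OF xc] by blast
  then show False
    using refractor_map_unique[OF x diff P(1)] P(2) U(2) by blast
qed

lemma trace_map_subset_liminf:
  assumes refr: "\<And>n. near_field_refractor \<kappa> \<Omega> D r0 (\<sigma> n)"
    and G: "openin (top_of_set (closure D)) G"
  shows "trace_map \<kappa> \<Omega> D \<rho> G
    \<subseteq> liminf (\<lambda>n. trace_map \<kappa> \<Omega> D (\<sigma> n) G) \<union> singular_set \<Omega> \<rho>"
proof
  fix x
  assume "x \<in> trace_map \<kappa> \<Omega> D \<rho> G"
  then obtain P where xc: "x \<in> closure \<Omega>" and P: "P \<in> refractor_map \<kappa> \<Omega> D \<rho> x" "P \<in> G"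
    by (auto simp: mem_trace_map)
  show "x \<in> liminf (\<lambda>n. trace_map \<kappa> \<Omega> D (\<sigma> n) G) \<union> singular_set \<Omega> \<rho>"
  proof (cases "x \<in> singular_set \<Omega> \<rho>")
    case False
    then have "x \<in> \<Omega>" "(\<lambda>y. \<rho> (y /\<^sub>R norm y)) differentiable (at x)"
      using xc unfolding singular_set_def by auto
    then have "eventually (\<lambda>n. refractor_map \<kappa> \<Omega> D (\<sigma> n) x \<inter> G \<noteq> {}) sequentially"
      using refractor_map_eventually_meets[OF refr G _ _ P] by blast
    then have "x \<in> liminf (\<lambda>n. trace_map \<kappa> \<Omega> D (\<sigma> n) G)"
      unfolding mem_liminf_iff mem_trace_map using xc by simp
    then show ?thesis
      by simp
  qed simp
qed

end

theorem lemma3p9: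
  fixes \<Omega> D :: "'a::euclidean_space set"
    and \<kappa> r0 C :: real
    and \<rho>s :: "nat \<Rightarrow> 'a \<Rightarrow> real" and \<rho> :: "'a \<Rightarrow> real"
  assumes "standing \<Omega> D"
    and "setting1 \<kappa> \<Omega> D r0 \<or> setting2 \<kappa> \<Omega> D r0"
    and "\<And>k. near_field_refractor \<kappa> \<Omega> D r0 (\<rho>s k)"
    and "C > 0"
    and "\<And>k x. x \<in> closure \<Omega> \<Longrightarrow> C \<le> \<rho>s k x \<and> \<rho>s k x \<le> r0"
    and "uniform_limit (closure \<Omega>) \<rho>s \<rho> sequentially"
  shows "near_field_refractor \<kappa> \<Omega> D r0 \<rho>
    \<and> (\<forall>K. compact K \<and> K \<subseteq> closure D \<longrightarrow>
          limsup (\<lambda>k. trace_map \<kappa> \<Omega> D (\<rho>s k) K) \<subseteq> trace_map \<kappa> \<Omega> D \<rho> K)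
    \<and> (\<forall>G. openin (top_of_set (closure D)) G \<longrightarrow>
          trace_map \<kappa> \<Omega> D \<rho> G
            \<subseteq> liminf (\<lambda>k. trace_map \<kappa> \<Omega> D (\<rho>s k) G) \<union> singular_set \<Omega> \<rho>)"
proof -
  have conv: "(\<lambda>k. \<rho>s k y) \<longlonglongrightarrow> \<rho> y" if "y \<in> closure \<Omega>" for y
    using tendsto_uniform_limitI[OF assms(6) that] .
  have "C \<le> \<rho> y \<and> \<rho> y \<le> r0" if "y \<in> closure \<Omega>" for y
    using assms(5) that
    by (auto intro: tendsto_lowerbound[OF conv[OF that]] tendsto_upperbound[OF conv[OF that]])
  then interpret radial_limit \<Omega> D \<kappa> r0 \<rho> \<rho>s
    using assms(1,2,4) conv by unfold_locales force+
  show ?thesis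
    using near_field_refractor_limit[OF assms(3)] limsup_trace_map_subset
      trace_map_subset_liminf[OF assms(3)] by simp
qed

end
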